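(* Let $m<M$ be real numbers and let $X$ be a random variable taking values in $[m,M]$, either discrete (taking finitely many values $x_1,\dots,x_n\in[m,M]$ with probabilities $p_1,\dots,p_n$) or continuous (with probability density $f$ on $[m,M]$). Let $\mu_3$ be its third central moment. Then $$|\mu_3|\le\frac{(M-m)^3}{6\sqrt3}.$$
   Context: The mean is $\mu_1'=\sum_{i=1}^n p_i x_i$ (discrete case) or $\mu_1'=\int_m^M x f(x)\,dx$ (continuous case), where $\sum p_i=1$, resp. $\int_m^M f(x)\,dx=1$. The $r$-th central moment is $\mu_r=\sum_{i=1}^n p_i (x_i-\mu_1')^r$, resp. $\mu_r=\int_m^M (x-\mu_1')^r f(x)\,dx$. *)

theory Defs
  imports "HOL-Analysis.Analysis"
begin

definition disc_mean :: "nat \<Rightarrow> (nat \<Rightarrow> real) \<Rightarrow> (nat \<Rightarrow> real) \<Rightarrow> real" where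
  "disc_mean n p x = (\<Sum>i=1..n. p i * x i)"

definition disc_central_moment :: "nat \<Rightarrow> nat \<Rightarrow> (nat \<Rightarrow> real) \<Rightarrow> (nat \<Rightarrow> real) \<Rightarrow> real" where
  "disc_central_moment r n p x = (\<Sum>i=1..n. p i * (x i - disc_mean n p x) ^ r)"

definition cont_mean :: "real \<Rightarrow> real \<Rightarrow> (real \<Rightarrow> real) \<Rightarrow> real" where
  "cont_mean m M f = integral {m..M} (\<lambda>t. t * f t)"

definition cont_central_moment :: "nat \<Rightarrow> real \<Rightarrow> real \<Rightarrow> (real \<Rightarrow> real) \<Rightarrow> real" where
  "cont_central_moment r m M f = integral {m..M} (\<lambda>t. (t - cont_mean m M f) ^ r * f t)"

end

theory Submission
  imports Defs
begin

text \<open>Only the first three raw moments of X enter, and only through the fact that a cubic which is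
  nonnegative on [m, M] has nonnegative expectation. After translating to [0, d] with d = M - m, the
  test cubics (t - r)^2 (d - t) and t (d - t) bound the third cumulant e3 - 3 e1 e2 + 2 e1^3 by a
  function of the mean u = e1 alone (taking r = 0 if u \<le> d/3 and r = (3u - d)/2 otherwise),
  whose maximum over [0, d] is d^3 / (6 \<surd>3). The lower
  bound follows by applying the upper one to -X.\<close>

definition cubic_moments_on :: "real \<Rightarrow> real \<Rightarrow> real \<Rightarrow> real \<Rightarrow> real \<Rightarrow> bool" where
  "cubic_moments_on m M e1 e2 e3 \<longleftrightarrow>
     (\<forall>a b c k. (\<forall>t\<in>{m..M}. 0 \<le> a * t^3 + b * t^2 + c * t + k) \<longrightarrow> 0 \<le> a * e3 + b * e2 + c * e1 + k)"

definition third_cumulant :: "real \<Rightarrow> real \<Rightarrow> real \<Rightarrow> real" where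
  "third_cumulant e1 e2 e3 = e3 - 3 * e1 * e2 + 2 * e1^3"

lemma cubic_moments_onD:
  assumes "cubic_moments_on m M e1 e2 e3" and "\<And>t. m \<le> t \<Longrightarrow> t \<le> M \<Longrightarrow> 0 \<le> a * t^3 + b * t^2 + c * t + k"
  shows "0 \<le> a * e3 + b * e2 + c * e1 + k"
  using assms unfolding cubic_moments_on_def by auto

lemma cubic_moments_on_shift:
  assumes "cubic_moments_on m M e1 e2 e3"
  shows "cubic_moments_on (m - s) (M - s) (e1 - s) (e2 - 2 * s * e1 + s^2) (e3 - 3 * s * e2 + 3 * s^2 * e1 - s^3)"
  unfolding cubic_moments_on_def
proof (intro allI impI)
  fix a b c k :: real
  assume q: "\<forall>t\<in>{m - s..M - s}. 0 \<le> a * t^3 + b * t^2 + c * t + k"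
  have "0 \<le> a * e3 + (b - 3 * a * s) * e2 + (c - 2 * b * s + 3 * a * s^2) * e1 + (k - c * s + b * s^2 - a * s^3)"
  proof (rule cubic_moments_onD[OF assms])
    fix t assume "m \<le> t" "t \<le> M"
    hence "0 \<le> a * (t - s)^3 + b * (t - s)^2 + c * (t - s) + k" using q by auto
    thus "0 \<le> a * t^3 + (b - 3 * a * s) * t^2 + (c - 2 * b * s + 3 * a * s^2) * t + (k - c * s + b * s^2 - a * s^3)"
      by (simp add: algebra_simps power2_eq_square power3_eq_cube)
  qed
  thus "0 \<le> a * (e3 - 3 * s * e2 + 3 * s^2 * e1 - s^3) + b * (e2 - 2 * s * e1 + s^2) + c * (e1 - s) + k"
    by (simp add: algebra_simps power2_eq_square power3_eq_cube)
qed

lemma cubic_moments_on_reflect: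
  assumes "cubic_moments_on m M e1 e2 e3"
  shows "cubic_moments_on (- M) (- m) (- e1) e2 (- e3)"
  unfolding cubic_moments_on_def
proof (intro allI impI)
  fix a b c k :: real
  assume q: "\<forall>t\<in>{- M..- m}. 0 \<le> a * t^3 + b * t^2 + c * t + k"
  have "0 \<le> (- a) * e3 + b * e2 + (- c) * e1 + k"
  proof (rule cubic_moments_onD[OF assms])
    fix t assume "m \<le> t" "t \<le> M"
    thus "0 \<le> (- a) * t^3 + b * t^2 + (- c) * t + k" using q[rule_format, of "- t"] by simp
  qed
  thus "0 \<le> a * (- e3) + b * e2 + c * (- e1) + k" by simp
qed

lemma third_cumulant_shift:
  "third_cumulant (e1 - s) (e2 - 2 * s * e1 + s^2) (e3 - 3 * s * e2 + 3 * s^2 * e1 - s^3) = third_cumulant e1 e2 e3"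
  unfolding third_cumulant_def by (simp add: algebra_simps power2_eq_square power3_eq_cube)

lemma third_cumulant_reflect: "third_cumulant (- e1) e2 (- e3) = - third_cumulant e1 e2 e3"
  unfolding third_cumulant_def by (simp add: algebra_simps power3_eq_cube)

text \<open>The cubic u (d - u) (d - 2 u) peaks at u = d/2 - d/(2 \<surd>3); with h = u - d/2 and
  h0 = -d/(2 \<surd>3) the difference to the peak value factors as 2 (h - h0)^2 (h + 2 h0).\<close>

lemma cubic_mean_bound:
  fixes d u :: real
  assumes "0 \<le> u" "u \<le> d"
  shows "(d - 3 * u) * d * u + 2 * u^3 \<le> d^3 / (6 * sqrt 3)"
proof -
  define s where "s = sqrt 3"
  have s2: "s^2 = 3" and spos: "s > 0" by (simp_all add: s_def)
  define h where "h = u - d/2"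
  define h0 where "h0 = - d / (2 * s)"
  have cubic_in_h: "(d - 3 * u) * d * u + 2 * u^3 = 2 * h^3 - d^2 * h / 2"
    unfolding h_def by (simp add: field_simps power3_eq_cube power2_eq_square)
  have peak: "2 * h0^3 - d^2 * h0 / 2 = d^3 / (6 * s)"
    using spos s2 by (simp add: h0_def field_simps power3_eq_cube power2_eq_square)
  have "d^2 = 12 * h0^2" using s2 spos by (simp add: h0_def power2_eq_square field_simps)
  hence factored: "2 * h^3 - d^2 * h / 2 - (2 * h0^3 - d^2 * h0 / 2) = 2 * (h - h0)^2 * (h + 2 * h0)"
    by (simp add: power2_eq_square power3_eq_cube algebra_simps)
  have "s \<le> 2" using real_sqrt_le_mono[of 3 "2^2"] by (simp add: s_def)
  hence "d / 2 \<le> d / s" using assms spos by (intro divide_left_mono) auto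
  moreover have "h + 2 * h0 = u - d / 2 - d / s" by (simp add: h_def h0_def)
  ultimately have "h + 2 * h0 \<le> 0" using assms by linarith
  hence "2 * (h - h0)^2 * (h + 2 * h0) \<le> 0" by (simp add: mult_nonneg_nonpos)
  thus ?thesis using cubic_in_h peak factored unfolding s_def by linarith
qed

lemma third_cumulant_le_of_cubic_moments_on:
  fixes d :: real
  assumes mom: "cubic_moments_on 0 d u e2 e3" and d: "0 \<le> d"
  shows "third_cumulant u e2 e3 \<le> d^3 / (6 * sqrt 3)"
proof -
  have u_nonneg: "0 \<le> u" using cubic_moments_onD[OF mom, of 0 0 1 0] by simp
  have u_le: "u \<le> d" using cubic_moments_onD[OF mom, of 0 0 "- 1" d] by simp
  have "0 \<le> 0 * e3 + (- 1) * e2 + d * u + 0"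
    by (rule cubic_moments_onD[OF mom]) (simp add: power2_eq_square mult_right_mono)
  hence e2_le: "e2 \<le> d * u" by simp
  have e3_le: "e3 \<le> (2 * r + d) * e2 - (r^2 + 2 * r * d) * u + r^2 * d" for r
  proof -
    have "0 \<le> (- 1) * e3 + (2 * r + d) * e2 + (- (r^2 + 2 * r * d)) * u + r^2 * d"
    proof (rule cubic_moments_onD[OF mom])
      fix t :: real assume "0 \<le> t" "t \<le> d"
      hence "0 \<le> (t - r)^2 * (d - t)" by simp
      thus "0 \<le> (- 1) * t^3 + (2 * r + d) * t^2 + (- (r^2 + 2 * r * d)) * t + r^2 * d"
        by (simp add: algebra_simps power2_eq_square power3_eq_cube)
    qed
    thus ?thesis by linarith
  qed
  show ?thesis
  proof (cases "u \<le> d / 3")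
    case True
    have "third_cumulant u e2 e3 \<le> (d - 3 * u) * e2 + 2 * u^3"
      using e3_le[of 0] unfolding third_cumulant_def by (simp add: algebra_simps)
    also have "\<dots> \<le> (d - 3 * u) * (d * u) + 2 * u^3"
      using True e2_le by (intro add_right_mono mult_left_mono) auto
    also have "\<dots> \<le> d^3 / (6 * sqrt 3)"
      using cubic_mean_bound[OF u_nonneg u_le] by (simp add: mult.assoc)
    finally show ?thesis .
  next
    case False
    have "third_cumulant u e2 e3 \<le> (d - u)^3 / 4"
      using e3_le[of "(3 * u - d) / 2"] unfolding third_cumulant_def
      by (simp add: field_simps power2_eq_square power3_eq_cube)
    also have "\<dots> \<le> (2 * d / 3)^3 / 4"
      using False u_le by (intro divide_right_mono power_mono) auto
    also have "\<dots> = d^3 / (27 / 2)" by (simp add: power3_eq_cube field_simps)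
    also have "\<dots> \<le> d^3 / (6 * sqrt 3)"
    proof (rule divide_left_mono)
      have "sqrt 3 \<le> sqrt ((9 / 4)^2)" by (intro real_sqrt_le_mono) (simp add: power2_eq_square)
      thus "6 * sqrt 3 \<le> 27 / 2" by simp
    qed (use d in auto)
    finally show ?thesis .
  qed
qed

lemma abs_third_cumulant_le_of_cubic_moments_on:
  assumes mom: "cubic_moments_on m M e1 e2 e3" and "m \<le> M"
  shows "\<bar>third_cumulant e1 e2 e3\<bar> \<le> (M - m)^3 / (6 * sqrt 3)"
proof -
  have "cubic_moments_on 0 (M - m) (e1 - m) (e2 - 2 * m * e1 + m^2) (e3 - 3 * m * e2 + 3 * m^2 * e1 - m^3)"
    using cubic_moments_on_shift[OF mom, of m] by simp
  from third_cumulant_le_of_cubic_moments_on[OF this] \<open>m \<le> M\<close>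
  have upper: "third_cumulant e1 e2 e3 \<le> (M - m)^3 / (6 * sqrt 3)"
    by (simp add: third_cumulant_shift)
  have "cubic_moments_on 0 (M - m) (- e1 + M) (e2 - 2 * (- M) * (- e1) + (- M)^2)
          (- e3 - 3 * (- M) * e2 + 3 * (- M)^2 * (- e1) - (- M)^3)"
    using cubic_moments_on_shift[OF cubic_moments_on_reflect[OF mom], of "- M"] by simp
  from third_cumulant_le_of_cubic_moments_on[OF this] \<open>m \<le> M\<close>
  have "- third_cumulant e1 e2 e3 \<le> (M - m)^3 / (6 * sqrt 3)"
    using third_cumulant_shift[of "- e1" "- M" e2 "- e3"] by (simp add: third_cumulant_reflect)
  with upper show ?thesis by linarith
qed

lemma sum_cubic_weighted:
  fixes p x :: "nat \<Rightarrow> real"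
  assumes "(\<Sum>i=1..n. p i) = 1"
  shows "(\<Sum>i=1..n. p i * (a * x i^3 + b * x i^2 + c * x i + k)) =
     a * (\<Sum>i=1..n. p i * x i^3) + b * (\<Sum>i=1..n. p i * x i^2) + c * (\<Sum>i=1..n. p i * x i) + k"
proof -
  have "(\<Sum>i=1..n. k * p i) = k" using assms by (simp flip: sum_distrib_left)
  thus ?thesis by (simp add: sum.distrib sum_distrib_left algebra_simps)
qed

lemma cubic_moments_on_discrete:
  fixes p x :: "nat \<Rightarrow> real"
  assumes "\<forall>i\<in>{1..n}. 0 \<le> p i \<and> x i \<in> {m..M}" and "(\<Sum>i=1..n. p i) = 1"
  shows "cubic_moments_on m M (\<Sum>i=1..n. p i * x i) (\<Sum>i=1..n. p i * x i^2) (\<Sum>i=1..n. p i * x i^3)"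
  unfolding cubic_moments_on_def
proof (intro allI impI)
  fix a b c k :: real
  assume "\<forall>t\<in>{m..M}. 0 \<le> a * t^3 + b * t^2 + c * t + k"
  hence "0 \<le> (\<Sum>i=1..n. p i * (a * x i^3 + b * x i^2 + c * x i + k))"
    using assms(1) by (intro sum_nonneg mult_nonneg_nonneg) auto
  thus "0 \<le> a * (\<Sum>i=1..n. p i * x i^3) + b * (\<Sum>i=1..n. p i * x i^2) + c * (\<Sum>i=1..n. p i * x i) + k"
    by (simp only: sum_cubic_weighted[OF assms(2)])
qed

lemma disc_central_moment_3:
  fixes p x :: "nat \<Rightarrow> real"
  assumes "(\<Sum>i=1..n. p i) = 1"
  shows "disc_central_moment 3 n p x =
    third_cumulant (\<Sum>i=1..n. p i * x i) (\<Sum>i=1..n. p i * x i^2) (\<Sum>i=1..n. p i * x i^3)"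
proof -
  define e1 where "e1 = disc_mean n p x"
  have "disc_central_moment 3 n p x =
      (\<Sum>i=1..n. p i * (1 * x i^3 + (- 3 * e1) * x i^2 + (3 * e1^2) * x i + (- (e1^3))))"
    unfolding disc_central_moment_def e1_def[symmetric]
    by (rule sum.cong) (simp_all add: algebra_simps power2_eq_square power3_eq_cube)
  thus ?thesis unfolding sum_cubic_weighted[OF assms] third_cumulant_def e1_def disc_mean_def
    by (simp add: algebra_simps power2_eq_square power3_eq_cube)
qed

lemma integrable_on_continuous_mult_nonneg:
  fixes f g :: "real \<Rightarrow> real"
  assumes "f integrable_on {m..M}" "\<forall>t\<in>{m..M}. 0 \<le> f t" and g: "continuous_on {m..M} g"
  shows "(\<lambda>t. g t * f t) integrable_on {m..M}"
proof -
  have "f absolutely_integrable_on {m..M}"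
    using assms by (intro nonnegative_absolutely_integrable) auto
  moreover have "g \<in> borel_measurable (lebesgue_on {m..M})"
    using g by (intro continuous_imp_measurable_on_sets_lebesgue) auto
  moreover have "bounded (g ` {m..M})"
    using g by (intro compact_imp_bounded compact_continuous_image) auto
  ultimately have "(\<lambda>t. g t * f t) absolutely_integrable_on {m..M}"
    by (intro absolutely_integrable_bounded_measurable_product_real) auto
  thus ?thesis using absolutely_integrable_on_def by blast
qed

lemma integral_cubic_weighted:
  fixes f :: "real \<Rightarrow> real"
  assumes f: "f integrable_on {m..M}" "\<forall>t\<in>{m..M}. 0 \<le> f t" and f1: "integral {m..M} f = 1"
  shows "integral {m..M} (\<lambda>t. (a * t^3 + b * t^2 + c * t + k) * f t) =
     a * integral {m..M} (\<lambda>t. t^3 * f t) + b * integral {m..M} (\<lambda>t. t^2 * f t)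
     + c * integral {m..M} (\<lambda>t. t * f t) + k"
proof -
  have "(\<lambda>t. t^j * f t) integrable_on {m..M}" for j :: nat
    by (rule integrable_on_continuous_mult_nonneg[OF f]) (intro continuous_intros)
  from this[of 1] this[of 2] this[of 3]
  have i1: "(\<lambda>t. t * f t) integrable_on {m..M}"
    and i2: "(\<lambda>t. t^2 * f t) integrable_on {m..M}"
    and i3: "(\<lambda>t. t^3 * f t) integrable_on {m..M}" by simp_all
  have "(\<lambda>t. (a * t^3 + b * t^2 + c * t + k) * f t) =
      (\<lambda>t. a * (t^3 * f t) + b * (t^2 * f t) + c * (t * f t) + k * f t)"
    by (rule ext) (simp add: algebra_simps)
  thus ?thesis using i1 i2 i3 f(1) f1
    by (simp add: integral_add integrable_add integral_mult_right integrable_on_mult_right)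
qed

lemma cubic_moments_on_density:
  fixes f :: "real \<Rightarrow> real"
  assumes f: "f integrable_on {m..M}" "\<forall>t\<in>{m..M}. 0 \<le> f t" "integral {m..M} f = 1"
  shows "cubic_moments_on m M (integral {m..M} (\<lambda>t. t * f t))
           (integral {m..M} (\<lambda>t. t^2 * f t)) (integral {m..M} (\<lambda>t. t^3 * f t))"
  unfolding cubic_moments_on_def
proof (intro allI impI)
  fix a b c k :: real
  assume q: "\<forall>t\<in>{m..M}. 0 \<le> a * t^3 + b * t^2 + c * t + k"
  have "0 \<le> integral {m..M} (\<lambda>t. (a * t^3 + b * t^2 + c * t + k) * f t)"
  proof (rule integral_nonneg)
    show "(\<lambda>t. (a * t^3 + b * t^2 + c * t + k) * f t) integrable_on {m..M}"
      by (rule integrable_on_continuous_mult_nonneg[OF f(1,2)]) (intro continuous_intros)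
  qed (use q f(2) in auto)
  thus "0 \<le> a * integral {m..M} (\<lambda>t. t^3 * f t) + b * integral {m..M} (\<lambda>t. t^2 * f t)
            + c * integral {m..M} (\<lambda>t. t * f t) + k"
    by (simp only: integral_cubic_weighted[OF f])
qed

lemma cont_central_moment_3:
  fixes f :: "real \<Rightarrow> real"
  assumes f: "f integrable_on {m..M}" "\<forall>t\<in>{m..M}. 0 \<le> f t" "integral {m..M} f = 1"
  shows "cont_central_moment 3 m M f = third_cumulant (integral {m..M} (\<lambda>t. t * f t))
           (integral {m..M} (\<lambda>t. t^2 * f t)) (integral {m..M} (\<lambda>t. t^3 * f t))"
proof -
  define e1 where "e1 = cont_mean m M f"
  have "(\<lambda>t. (t - e1)^3 * f t) = (\<lambda>t. (1 * t^3 + (- 3 * e1) * t^2 + (3 * e1^2) * t + (- (e1^3))) * f t)"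
    by (rule ext) (simp add: algebra_simps power2_eq_square power3_eq_cube)
  hence "cont_central_moment 3 m M f =
      integral {m..M} (\<lambda>t. (1 * t^3 + (- 3 * e1) * t^2 + (3 * e1^2) * t + (- (e1^3))) * f t)"
    unfolding cont_central_moment_def e1_def[symmetric] by simp
  thus ?thesis unfolding integral_cubic_weighted[OF f] third_cumulant_def e1_def cont_mean_def
    by (simp add: algebra_simps power2_eq_square power3_eq_cube)
qed

theorem theorem2p3:
  fixes m M :: real
  assumes "m < M"
  shows "(\<forall>(n::nat) (p::nat \<Rightarrow> real) (x::nat \<Rightarrow> real).
            (\<forall>i\<in>{1..n}. 0 \<le> p i \<and> x i \<in> {m..M}) \<and> (\<Sum>i=1..n. p i) = 1
            \<longrightarrow> \<bar>disc_central_moment 3 n p x\<bar> \<le> (M - m) ^ 3 / (6 * sqrt 3))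
       \<and> (\<forall>f::real \<Rightarrow> real.
            (\<forall>t\<in>{m..M}. 0 \<le> f t) \<and> f integrable_on {m..M} \<and> integral {m..M} f = 1
            \<longrightarrow> \<bar>cont_central_moment 3 m M f\<bar> \<le> (M - m) ^ 3 / (6 * sqrt 3))"
proof (intro conjI allI impI; elim conjE)
  fix n and p x :: "nat \<Rightarrow> real"
  assume "\<forall>i\<in>{1..n}. 0 \<le> p i \<and> x i \<in> {m..M}" and p1: "(\<Sum>i=1..n. p i) = 1"
  with assms show "\<bar>disc_central_moment 3 n p x\<bar> \<le> (M - m) ^ 3 / (6 * sqrt 3)"
    unfolding disc_central_moment_3[OF p1]
    by (intro abs_third_cumulant_le_of_cubic_moments_on cubic_moments_on_discrete) auto
next
  fix f :: "real \<Rightarrow> real"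
  assume "\<forall>t\<in>{m..M}. 0 \<le> f t" "f integrable_on {m..M}" "integral {m..M} f = 1"
  with assms show "\<bar>cont_central_moment 3 m M f\<bar> \<le> (M - m) ^ 3 / (6 * sqrt 3)"
    unfolding cont_central_moment_3[OF \<open>f integrable_on {m..M}\<close> \<open>\<forall>t\<in>{m..M}. 0 \<le> f t\<close> \<open>integral {m..M} f = 1\<close>]
    by (intro abs_third_cumulant_le_of_cubic_moments_on cubic_moments_on_density) auto
qed

end
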